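(* Let $y$ be a point of the upper half-plane $\mathfrak h_1$ such that $\tau(y)=\gamma y$ for some $\gamma\in\Gamma(2)$, where $\tau(y)=-\overline y$. Then there exist $\beta\in SL(2,\mathbb Z)$ and $Y>0$ such that $y=\beta\cdot iY$.
   Context: $SL(2,\mathbb R)$ acts on $\mathfrak h_1=\{z\in\mathbb C:\mathrm{Im}z>0\}$ by fractional linear transformations. $\Gamma(2)=\{\gamma\in SL(2,\mathbb Z):\gamma\equiv I\bmod2\}$. *)

theory Defs
  imports Complex_Main
begin

text \<open>A 2x2 integer matrix (a b; c d) is represented as the tuple (a, b, c, d).\<close>

definition SL2Z :: "(int \<times> int \<times> int \<times> int) set" where
  "SL2Z = {(a, b, c, d). a * d - b * c = 1}"

definition Gamma2 :: "(int \<times> int \<times> int \<times> int) set" where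
  "Gamma2 = {(a, b, c, d). (a, b, c, d) \<in> SL2Z \<and> a mod 2 = 1 \<and> b mod 2 = 0
                          \<and> c mod 2 = 0 \<and> d mod 2 = 1}"

definition moebius :: "int \<times> int \<times> int \<times> int \<Rightarrow> complex \<Rightarrow> complex" where
  "moebius M z = (case M of (a, b, c, d) \<Rightarrow>
     (of_int a * z + of_int b) / (of_int c * z + of_int d))"

definition upper_half_plane :: "complex set" where
  "upper_half_plane = {z. Im z > 0}"

definition tau :: "complex \<Rightarrow> complex" where
  "tau y = - cnj y"

end

theory Submission
  imports Defs "HOL-Computational_Algebra.Euclidean_Algorithm"
begin

text \<open>
  Comparing imaginary and real parts in \<open>-cnj y = \<gamma> y\<close> with \<open>\<gamma> = (a b; c d)\<close> gives \<open>d = a\<close>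
  and \<open>c |y|\<^sup>2 + 2 a Re y + b = 0\<close>: \<open>y\<close> lies on a geodesic. For \<open>\<gamma> \<in> \<Gamma>(2)\<close> write
  \<open>b = 2b'\<close>, \<open>c = 2c'\<close>, \<open>a = 2m + 1\<close>; the determinant condition becomes \<open>m (m + 1) = c' b'\<close>,
  so by the four-number lemma \<open>m = pq\<close>, \<open>m + 1 = rs\<close>, \<open>c' = pr\<close>, \<open>b' = qs\<close>. The matrix
  \<open>M = (r q; p s)\<close> has determinant 1 and \<open>Re (M y)\<close> is a positive multiple of
  \<open>c' |y|\<^sup>2 + a Re y + b' = 0\<close>, so \<open>M y\<close> lies on the positive imaginary axis and
  \<open>y = M\<^sup>-\<^sup>1 (\<i> Y)\<close>.
\<close>

lemma mult_eq_mult_factorization: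
  fixes x y u v :: "'a :: euclidean_ring_gcd"
  assumes "x * y = u * v"
  shows "\<exists>p q r s. x = p * q \<and> y = r * s \<and> u = p * r \<and> v = q * s"
proof (cases "x = 0 \<and> u = 0")
  case True
  then show ?thesis by (metis mult_1_right mult_zero_left)
next
  case False
  define p where "p = gcd x u"
  define q where "q = x div p"
  define r where "r = u div p"
  have "p \<noteq> 0" using False by (simp add: p_def)
  have x: "x = p * q" and u: "u = p * r" by (simp_all add: p_def q_def r_def)
  have "gcd q r = 1"
    using div_gcd_coprime[OF False[unfolded de_Morgan_conj]] by (simp add: p_def q_def r_def)
  then obtain \<alpha> \<beta> where bezout: "\<alpha> * q + \<beta> * r = 1"
    using bezout_coefficients_fst_snd by metis
  have qy: "q * y = r * v"
    using assms \<open>p \<noteq> 0\<close> unfolding x u by (simp add: mult.assoc)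
  define s where "s = \<alpha> * v + \<beta> * y"
  have "y = r * s"
  proof -
    have "r * s = \<alpha> * (q * y) + \<beta> * r * y" by (simp add: s_def qy algebra_simps)
    also have "\<dots> = y" by (metis bezout distrib_right mult.assoc mult_1)
    finally show ?thesis ..
  qed
  moreover have "v = q * s"
  proof -
    have "q * s = \<alpha> * q * v + \<beta> * (r * v)" by (simp add: s_def flip: qy; simp add: algebra_simps)
    also have "\<dots> = v" by (metis bezout distrib_right mult.assoc mult_1)
    finally show ?thesis ..
  qed
  ultimately show ?thesis using x u by blast
qed

lemma moebius_denominator_nonzero:
  assumes "Im z \<noteq> 0" and "c \<noteq> 0 \<or> d \<noteq> 0"
  shows "of_int c * z + of_int d \<noteq> 0"
proof
  assume "of_int c * z + of_int d = 0"
  then have "of_int c * Im z = 0" and "of_int c * Re z + of_int d = 0"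
    by (simp_all add: complex_eq_iff)
  with assms show False by simp
qed

lemma moebius_inverse:
  assumes det: "a * d - b * c = 1" and D: "of_int c * z + of_int d \<noteq> 0"
  shows "moebius (d, -b, -c, a) (moebius (a, b, c, d) z) = z"
proof -
  let ?N = "of_int a * z + of_int b" and ?D = "of_int c * z + of_int d"
  have det': "of_int a * of_int d - of_int b * of_int c = (1 :: complex)"
    using arg_cong[OF det, of "of_int :: int \<Rightarrow> complex"] by simp
  have "of_int d * (?N / ?D) + of_int (- b) = (of_int d * ?N - of_int b * ?D) / ?D"
    using D by (simp add: field_simps)
  also have "\<dots> = z / ?D"
    using det' by (simp add: algebra_simps)
  finally have num: "of_int d * (?N / ?D) + of_int (- b) = z / ?D" .
  have "of_int (- c) * (?N / ?D) + of_int a = (of_int a * ?D - of_int c * ?N) / ?D"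
    using D by (simp add: field_simps)
  also have "\<dots> = 1 / ?D"
    using det' by (simp add: algebra_simps)
  finally have den: "of_int (- c) * (?N / ?D) + of_int a = 1 / ?D" .
  show ?thesis
    unfolding moebius_def prod.case num den using D by simp
qed

lemma Re_moebius:
  "Re (moebius (a, b, c, d) z) =
     (of_int (a * c) * (cmod z)\<^sup>2 + of_int (a * d + b * c) * Re z + of_int (b * d))
       / (cmod (of_int c * z + of_int d))\<^sup>2"
  by (simp add: moebius_def Re_divide cmod_power2) (simp add: algebra_simps power2_eq_square)

lemma Im_moebius:
  assumes "a * d - b * c = 1"
  shows "Im (moebius (a, b, c, d) z) = Im z / (cmod (of_int c * z + of_int d))\<^sup>2"
proof -
  have "Im ((of_int a * z + of_int b) * cnj (of_int c * z + of_int d)) = of_int (a * d - b * c) * Im z"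
    by (simp add: algebra_simps)
  then show ?thesis
    using assms by (simp add: moebius_def Im_divide cmod_power2)
qed

lemma SL2Z_orbit_of_imag_axis:
  assumes "Im y > 0" and M: "(a, b, c, d) \<in> SL2Z" and "Re (moebius (a, b, c, d) y) = 0"
  shows "\<exists>\<beta>\<in>SL2Z. \<exists>Y::real. Y > 0 \<and> y = moebius \<beta> (\<i> * complex_of_real Y)"
proof -
  have det: "a * d - b * c = 1" using M by (simp add: SL2Z_def)
  have D: "of_int c * y + of_int d \<noteq> 0"
    using moebius_denominator_nonzero[of y c d] assms(1) det by fastforce
  define w where "w = moebius (a, b, c, d) y"
  have "Im w > 0"
    using Im_moebius[OF det] assms(1) D by (simp add: w_def)
  moreover have "w = \<i> * complex_of_real (Im w)"
    using assms(3) by (simp add: w_def complex_eq_iff)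
  moreover have "y = moebius (d, -b, -c, a) w"
    using moebius_inverse[OF det D] by (simp add: w_def)
  moreover have "(d, -b, -c, a) \<in> SL2Z"
    using det by (simp add: SL2Z_def algebra_simps)
  ultimately show ?thesis by metis
qed

lemma tau_eq_moebius_imp:
  assumes "Im y \<noteq> 0" and fixed: "tau y = moebius (a, b, c, d) y"
  shows "d = a" and "of_int c * (cmod y)\<^sup>2 + 2 * of_int a * Re y + of_int b = 0"
proof -
  let ?D = "of_int c * y + of_int d"
  have "?D \<noteq> 0"
  proof
    assume "?D = 0"
    then have "tau y = 0" using fixed by (simp add: moebius_def)
    with assms(1) show False by (simp add: tau_def)
  qed
  then have eq: "- cnj y * ?D = of_int a * y + of_int b"
    using fixed by (simp add: tau_def moebius_def field_simps)
  from arg_cong[OF eq, of Im] have "Im y * (of_int d - of_int a) = 0"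
    by (simp add: algebra_simps)
  with assms(1) show "d = a" by simp
  from arg_cong[OF eq, of Re] show "of_int c * (cmod y)\<^sup>2 + 2 * of_int a * Re y + of_int b = 0"
    using \<open>d = a\<close> unfolding cmod_power2 by (simp add: algebra_simps power2_eq_square)
qed

theorem lemma5p3:
  fixes y :: complex
  assumes "y \<in> upper_half_plane"
    and "\<exists>\<gamma>\<in>Gamma2. tau y = moebius \<gamma> y"
  shows "\<exists>\<beta>\<in>SL2Z. \<exists>Y::real. Y > 0 \<and> y = moebius \<beta> (\<i> * complex_of_real Y)"
proof -
  have Im_y: "Im y > 0" using assms(1) by (simp add: upper_half_plane_def)
  obtain a b c d where \<gamma>: "(a, b, c, d) \<in> Gamma2" and fixed: "tau y = moebius (a, b, c, d) y"
    using assms(2) by auto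
  have "d = a" and quadric: "of_int c * (cmod y)\<^sup>2 + 2 * of_int a * Re y + of_int b = 0"
    using tau_eq_moebius_imp[of y] Im_y fixed by simp_all
  obtain b' c' m where b: "b = 2 * b'" and c: "c = 2 * c'" and a: "a = 2 * m + 1"
    using \<gamma> unfolding Gamma2_def
    by (auto elim!: evenE oddE simp flip: even_iff_mod_2_eq_zero odd_iff_mod_2_eq_one)
  have "a * d - b * c = 1" using \<gamma> by (simp add: Gamma2_def SL2Z_def)
  then have "4 * (m * (m + 1)) = 4 * (c' * b')"
    unfolding \<open>d = a\<close> a b c by (simp add: algebra_simps)
  then have "m * (m + 1) = c' * b'" by simp
  then obtain p q r s where "m = p * q" "m + 1 = r * s" "c' = p * r" "b' = q * s"
    using mult_eq_mult_factorization by blast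
  then have "r * s - q * p = 1" and "r * p = c'" and "r * s + q * p = a" and "q * s = b'"
    using a by (simp_all add: algebra_simps)
  then have "(r, q, p, s) \<in> SL2Z" and "Re (moebius (r, q, p, s) y) = 0"
    using quadric unfolding b c by (auto simp: SL2Z_def Re_moebius)
  then show ?thesis
    using SL2Z_orbit_of_imag_axis Im_y by blast
qed

end
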